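(* For $i,j\in I^+$ with $i\le j$, $[\mathfrak X_{-j_R},[\mathfrak D_j,\Psi_i]_q]=0$ as operators on $\mathcal X$.
   Context: Let $\mathbf{k}$ be a field of characteristic $0$, $q\in\mathbf{k}$ invertible and not a root of unity, $n\ge2$, $I=\{-n,\dots,-1,1,\dots,n\}$, $I^+=\{1,\dots,n\}$, $\lambda=q-q^{-1}$, $[m]_q=\frac{q^m-q^{-m}}{q-q^{-1}}$, $[A,B]_v=AB-vBA$, $[A,B]=[A,B]_1$. The quantum symplectic space $\mathcal X$ is the $\mathbf{k}$-algebra generated by $x_i$ ($i\in I$) with relations $x_jx_i=qx_ix_j$ for $i<j$, $j\neq-i$, and $x_ix_{-i}=q^2x_{-i}x_i+q^2\lambda\Omega_{i+1}$ ($i\in I^+$), $\Omega_i=\sum_{j=i}^nq^{j-i}x_{-j}x_j$, $\Omega_{n+1}=0$; normal monomials $x^a=x_{-n}^{a_{-n}}\cdots x_{-1}^{a_{-1}}x_1^{a_1}\cdots x_n^{a_n}$ form a basis. Linear operators: $\partial_i.x^a=[a_i]_qx^{a-\varepsilon_i}$, $x_{i_L}.f=x_if$, $x_{i_R}.f=fx_i$, $\mu_i^{\pm1}.x^a=q^{\pm a_i}x^a$ ($i\in I$); products are compositions (rightmost first). For $i\in I^+$: $\tau_i=\prod_{j=i}^n\mu_j$, $\tau_{-i}=\prod_{j=-n}^{-i}\mu_j$, $\tau_{\pm(n+1)}=1$, $\Lambda_0=1$, $\Lambda_{-i}=\prod_{j=-i}^{-1}\mu_j$, $\Lambda_i=\prod_{j=1}^i\mu_j$,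 $\mathfrak D_{-i}=\mu_i\tau_{-i-1}^{-1}\partial_{-i}$, $\mathfrak D_i=\tau_1^{-1}\Lambda_{i-1}^{-1}\partial_i$, $\mathfrak X_{-i_L}=\mu_i^{-1}\mu_{-i}x_{-i_L}$, $\mathfrak X_{i_R}=\Lambda_i^2x_{i_R}$, $\Psi_{n+1}=0$, $\Psi_i=\tau_{-i}^2\sum_{j=i}^nq^{j-i}\tau_{-j}^{-2}\mathfrak X_{-j_L}\mathfrak X_{j_R}$, and $\mathfrak X_{-i_R}=q^i\Lambda_{1-i}^2(\mu_i^2\mathfrak X_{-i_L}+\lambda\mu_{-i}^2\Psi_{i+1}\mathfrak D_i)$. *)

theory Defs
  imports Main
begin

text \<open>
  Model of the quantum symplectic space X: an element is given by its coordinates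
  with respect to the normal-monomial basis x^a.  Exponent vectors are functions
  a :: int => nat (only the entries at indices in I = {-n..-1} \<union> {1..n} matter).
\<close>

type_synonym 'k elt = "(int \<Rightarrow> nat) \<Rightarrow> 'k"
type_synonym 'k op = "'k elt \<Rightarrow> 'k elt"

definition Iset :: "nat \<Rightarrow> int set" where
  "Iset n = {-int n..-1} \<union> {1..int n}"

definition Xspace :: "nat \<Rightarrow> 'k::zero elt set" where
  "Xspace n = {f. finite {a. f a \<noteq> 0} \<and> (\<forall>a. f a \<noteq> 0 \<longrightarrow> (\<forall>k. k \<notin> Iset n \<longrightarrow> a k = 0))}"

definition qint :: "'k::field \<Rightarrow> int \<Rightarrow> 'k" where
  "qint q m = (q powi m - q powi (-m)) / (q - inverse q)"

definition mu :: "'k::field \<Rightarrow> int \<Rightarrow> int \<Rightarrow> 'k op" where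
  "mu q i m f = (\<lambda>b. q powi (m * int (b i)) * f b)"

definition prodmu :: "'k::field \<Rightarrow> int list \<Rightarrow> int \<Rightarrow> 'k op" where
  "prodmu q js m = foldr (\<lambda>j F. mu q j m \<circ> F) js id"

definition tau :: "'k::field \<Rightarrow> nat \<Rightarrow> int \<Rightarrow> int \<Rightarrow> 'k op" where
  "tau q n t m = prodmu q (if t > 0 then [t..int n] else [-int n..t]) m"

definition Lam :: "'k::field \<Rightarrow> int \<Rightarrow> int \<Rightarrow> 'k op" where
  "Lam q t m = prodmu q (if t \<ge> 0 then [1..t] else [t..-1]) m"

definition qpartial :: "'k::field \<Rightarrow> int \<Rightarrow> 'k op" where
  "qpartial q i f = (\<lambda>b. qint q (int (b i) + 1) * f (b(i := b i + 1)))"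

text \<open>Left multiplication by x_{-j} (j in I^+): by the relations x_{-j} x_{-k} = q x_{-k} x_{-j}
  for k > j, one has x_{-j} x^a = q^(sum_{k=j+1}^n a_{-k}) x^(a + eps_{-j}).\<close>
definition xLneg :: "'k::field \<Rightarrow> nat \<Rightarrow> int \<Rightarrow> 'k op" where
  "xLneg q n j f = (\<lambda>b. if b (-j) \<ge> 1
      then q ^ (\<Sum>k\<in>{j+1..int n}. b (-k)) * f (b(-j := b (-j) - 1)) else 0)"

text \<open>Right multiplication by x_j (j in I^+): by the relations x_k x_j = q x_j x_k for k > j,
  one has x^a x_j = q^(sum_{k=j+1}^n a_k) x^(a + eps_j).\<close>
definition xRpos :: "'k::field \<Rightarrow> nat \<Rightarrow> int \<Rightarrow> 'k op" where
  "xRpos q n j f = (\<lambda>b. if b j \<ge> 1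
      then q ^ (\<Sum>k\<in>{j+1..int n}. b k) * f (b(j := b j - 1)) else 0)"

definition fD :: "'k::field \<Rightarrow> nat \<Rightarrow> int \<Rightarrow> 'k op" where
  "fD q n j = tau q n 1 (-1) \<circ> Lam q (j - 1) (-1) \<circ> qpartial q j"

definition fXnegL :: "'k::field \<Rightarrow> nat \<Rightarrow> int \<Rightarrow> 'k op" where
  "fXnegL q n j = mu q j (-1) \<circ> mu q (-j) 1 \<circ> xLneg q n j"

definition fXposR :: "'k::field \<Rightarrow> nat \<Rightarrow> int \<Rightarrow> 'k op" where
  "fXposR q n j = Lam q j 2 \<circ> xRpos q n j"

definition Psi :: "'k::field \<Rightarrow> nat \<Rightarrow> int \<Rightarrow> 'k op" where
  "Psi q n i = (if i = int n + 1 then (\<lambda>f b. 0) else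
     tau q n (-i) 2 \<circ>
       (\<lambda>f b. \<Sum>j\<in>{i..int n}. q ^ nat (j - i) *
                 (tau q n (-j) (-2) \<circ> fXnegL q n j \<circ> fXposR q n j) f b))"

definition fXnegR :: "'k::field \<Rightarrow> nat \<Rightarrow> int \<Rightarrow> 'k op" where
  "fXnegR q n j = (\<lambda>f b. q ^ nat j *
     Lam q (1 - j) 2
       (\<lambda>b'. (mu q j 2 \<circ> fXnegL q n j) f b'
            + (q - inverse q) * (mu q (-j) 2 \<circ> Psi q n (j + 1) \<circ> fD q n j) f b') b)"

definition qcomm :: "'k::field \<Rightarrow> 'k op \<Rightarrow> 'k op \<Rightarrow> 'k op" where
  "qcomm v A B = (\<lambda>f b. A (B f) b - v * B (A f) b)"

end

theory Submission
  imports Defs "HOL-Library.Function_Algebras"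
begin

text \<open>
  Every operator involved acts on the monomial basis as a finite sum of weighted shifts
  x^a \<mapsto> c(a) x^(a+s), and weighted shifts compose by multiplying coefficients along the
  shift.  Expanding \<Psi>_i into its terms, the q-commutator [D_j, \<Psi>_i]_q becomes a sum over
  i \<le> k \<le> j of shifts by e_(-k) + e_k - e_j: the terms with k > j cancel, and for k = j the
  recursion [a+1]_q - q [a]_q = q^(-a) leaves a single monomial.  Likewise X_(-j_R) is a sum over
  j \<le> l \<le> n of shifts by e_(-l) + e_l - e_j.  Any two of these summands commute, because
  their coefficients satisfy c_k(a) d_l(a + s_k) = d_l(a) c_k(a + s_l); this is an identity of
  Laurent monomials in q (times q-integers), checked by comparing exponents, which is legitimate
  as q is not a root of unity.
\<close>

section \<open>Weighted shift operators\<close>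

type_synonym ivec = "int \<Rightarrow> int"

text \<open>
  \<open>wshift c s\<close> maps x^a to \<open>c a\<close> x^(a+s); the coordinate at exponent \<open>b\<close> is therefore
  read off at \<open>b - s\<close>.
\<close>

definition wshift :: "(ivec \<Rightarrow> 'k::field) \<Rightarrow> ivec \<Rightarrow> 'k op" where
  "wshift c s f b =
     (if 0 \<le> (int \<circ> b) - s then c ((int \<circ> b) - s) * f (nat \<circ> ((int \<circ> b) - s)) else 0)"

definition wsum :: "('i \<Rightarrow> ivec \<Rightarrow> 'k::field) \<Rightarrow> ('i \<Rightarrow> ivec) \<Rightarrow> 'i set \<Rightarrow> 'k op" where
  "wsum c s K g b = (\<Sum>k\<in>K. wshift (c k) (s k) g b)"

text \<open>
  Composing with \<open>wshift c s\<close> on the right is only well behaved if \<open>c\<close> vanishes wherever the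
  shifted exponent leaves the nonnegative cone, as the coefficient [a_j]_q of the q-derivative
  does at a_j = 0.
\<close>

definition admissible :: "(ivec \<Rightarrow> 'k::zero) \<Rightarrow> ivec \<Rightarrow> bool" where
  "admissible c s \<longleftrightarrow> (\<forall>a\<ge>0. \<not> 0 \<le> a + s \<longrightarrow> c a = 0)"

lemma admissible_nonneg: "0 \<le> s \<Longrightarrow> admissible c s"
  by (auto simp: admissible_def le_fun_def add_nonneg_nonneg)

lemma admissible_lowering:
  assumes "\<And>x. x \<noteq> j \<Longrightarrow> 0 \<le> s x" "-1 \<le> s j" "\<And>a. a j = 0 \<Longrightarrow> c a = 0"
  shows "admissible c s"
  unfolding admissible_def
proof (intro allI impI)
  fix a :: ivec assume "0 \<le> a" "\<not> 0 \<le> a + s"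
  then obtain y where y: "a y + s y < 0" and a: "\<And>x. 0 \<le> a x"
    by (auto simp: le_fun_def not_le)
  with assms(1) have "y = j" by (metis add_nonneg_nonneg not_le)
  with y a assms(2) have "a j = 0" by (smt (verit))
  then show "c a = 0" by (rule assms(3))
qed

lemma wshift_wshift:
  assumes "admissible c2 s2"
  shows "wshift c1 s1 (wshift c2 s2 f) = wshift (\<lambda>a. c2 a * c1 (a + s2)) (s1 + s2) f"
proof
  fix b :: "int \<Rightarrow> nat"
  define a1 where "a1 = (int \<circ> b) - s1"
  define a where "a = (int \<circ> b) - (s1 + s2)"
  have "a + s2 = a1" by (simp add: a_def a1_def)
  show "wshift c1 s1 (wshift c2 s2 f) b = wshift (\<lambda>a. c2 a * c1 (a + s2)) (s1 + s2) f b"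
  proof (cases "0 \<le> a1")
    case True
    then have "(int \<circ> (nat \<circ> a1)) - s2 = a"
      by (auto simp: a_def a1_def le_fun_def fun_eq_iff)
    then show ?thesis using True \<open>a + s2 = a1\<close> by (simp add: wshift_def flip: a_def a1_def)
  next
    case False
    then have "c2 a = 0" if "0 \<le> a"
      using assms that \<open>a + s2 = a1\<close> unfolding admissible_def by metis
    then show ?thesis using False by (simp add: wshift_def flip: a_def a1_def)
  qed
qed

lemma wshift_comp:
  "admissible c2 s2 \<Longrightarrow> wshift c1 s1 \<circ> wshift c2 s2 = wshift (\<lambda>a. c2 a * c1 (a + s2)) (s1 + s2)"
  by (rule ext) (simp add: wshift_wshift)

lemma wshift_diag_comp: "wshift c 0 \<circ> wshift d 0 = wshift (\<lambda>a. d a * c a) 0"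
  by (simp add: wshift_comp admissible_nonneg)

lemma wshift_cong: "(\<And>a. 0 \<le> a \<Longrightarrow> c a = c' a) \<Longrightarrow> wshift c s = wshift c' s"
  by (intro ext) (simp add: wshift_def)

lemma wshift_eq_0: "(\<And>a. 0 \<le> a \<Longrightarrow> c a = 0) \<Longrightarrow> wshift c s f b = 0"
  by (simp add: wshift_def)

lemma scale_wshift: "v * wshift c s g b = wshift (\<lambda>a. v * c a) s g b"
  by (simp add: wshift_def)

lemma wshift_commute:
  assumes "admissible c s" "admissible d t" "\<And>a. 0 \<le> a \<Longrightarrow> c a * d (a + s) = d a * c (a + t)"
  shows "wshift d t (wshift c s f) = wshift c s (wshift d t f)"
proof -
  have "wshift d t (wshift c s f) = wshift (\<lambda>a. c a * d (a + s)) (t + s) f"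
    using assms(1) by (rule wshift_wshift)
  also have "\<dots> = wshift (\<lambda>a. d a * c (a + t)) (s + t) f"
    using wshift_cong[of "\<lambda>a. c a * d (a + s)" "\<lambda>a. d a * c (a + t)" "s + t"] assms(3)
    by (simp add: add.commute)
  also have "\<dots> = wshift c s (wshift d t f)"
    using assms(2) by (rule wshift_wshift[symmetric])
  finally show ?thesis .
qed

lemma wshift_sum: "wshift c s (\<lambda>b. \<Sum>k\<in>K. g k b) b0 = (\<Sum>k\<in>K. wshift c s (g k) b0)"
  by (simp add: wshift_def sum_distrib_left)

lemma wshift_wsum:
  assumes "\<And>k. k \<in> K \<Longrightarrow> admissible (d k) (t k)"
  shows "wshift c s (wsum d t K g) = wsum (\<lambda>k a. d k a * c (a + t k)) (\<lambda>k. s + t k) K g"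
proof
  fix b
  have "wshift c s (wsum d t K g) b = (\<Sum>k\<in>K. wshift c s (wshift (d k) (t k) g) b)"
    unfolding wsum_def by (rule wshift_sum)
  also have "\<dots> = wsum (\<lambda>k a. d k a * c (a + t k)) (\<lambda>k. s + t k) K g b"
    unfolding wsum_def using assms by (intro sum.cong) (simp_all add: wshift_wshift)
  finally show "wshift c s (wsum d t K g) b = wsum (\<lambda>k a. d k a * c (a + t k)) (\<lambda>k. s + t k) K g b"
    .
qed

lemma wsum_cong:
  assumes "\<And>k a. k \<in> K \<Longrightarrow> 0 \<le> a \<Longrightarrow> c k a = c' k a" "\<And>k. k \<in> K \<Longrightarrow> s k = s' k"
  shows "wsum c s K g b = wsum c' s' K g b"
  unfolding wsum_def
proof (intro sum.cong refl)
  fix k assume "k \<in> K"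
  then show "wshift (c k) (s k) g b = wshift (c' k) (s' k) g b"
    using assms wshift_cong[of "c k" "c' k" "s k"] by simp
qed

lemma wsum_wshift:
  assumes "admissible c s"
  shows "wsum d t K (wshift c s g) = wsum (\<lambda>k a. c a * d k (a + s)) (\<lambda>k. t k + s) K g"
  using assms by (intro ext) (simp add: wsum_def wshift_wshift)

lemma wshift_comp_wsum:
  "(\<And>k. k \<in> K \<Longrightarrow> admissible (d k) (t k)) \<Longrightarrow>
    wshift c s \<circ> wsum d t K = wsum (\<lambda>k a. d k a * c (a + t k)) (\<lambda>k. s + t k) K"
  by (rule ext) (simp add: wshift_wsum)

lemma wsum_comp_wshift:
  "admissible c s \<Longrightarrow> wsum d t K \<circ> wshift c s = wsum (\<lambda>k a. c a * d k (a + s)) (\<lambda>k. t k + s) K"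
  by (rule ext) (simp add: wsum_wshift)

lemma scale_wsum: "v * wsum c s K g b = wsum (\<lambda>k a. v * c k a) s K g b"
  by (simp add: wsum_def sum_distrib_left scale_wshift)

lemma wsum_diff_scaled:
  "wsum c s K g b - v * wsum d s K g b = wsum (\<lambda>k a. c k a - v * d k a) s K g b"
  unfolding wsum_def sum_distrib_left sum_subtractf[symmetric]
  by (intro sum.cong refl) (simp add: wshift_def algebra_simps)

lemma wsum_commute:
  assumes "\<And>k l. k \<in> K \<Longrightarrow> l \<in> L \<Longrightarrow>
             wshift (d l) (t l) (wshift (c k) (s k) f) = wshift (c k) (s k) (wshift (d l) (t l) f)"
  shows "wsum d t L (wsum c s K f) = wsum c s K (wsum d t L f)"
proof
  fix b
  have "wsum d t L (wsum c s K f) b = (\<Sum>l\<in>L. \<Sum>k\<in>K. wshift (d l) (t l) (wshift (c k) (s k) f) b)"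
    by (simp add: wsum_def[abs_def] wshift_sum)
  also have "\<dots> = (\<Sum>k\<in>K. \<Sum>l\<in>L. wshift (c k) (s k) (wshift (d l) (t l) f) b)"
    using assms by (subst sum.swap) simp
  also have "\<dots> = wsum c s K (wsum d t L f) b"
    by (simp add: wsum_def[abs_def] wshift_sum)
  finally show "wsum d t L (wsum c s K f) b = wsum c s K (wsum d t L f) b" .
qed

section \<open>The operators as sums of weighted shifts\<close>

definition unit_vec :: "int \<Rightarrow> ivec" where
  "unit_vec m = (\<lambda>x. if x = m then 1 else 0)"

definition pair_vec :: "int \<Rightarrow> ivec" where
  "pair_vec k = unit_vec (-k) + unit_vec k"

lemma unit_vec_nonneg: "0 \<le> unit_vec m"
  by (simp add: le_fun_def unit_vec_def)

lemma pair_vec_nonneg: "0 \<le> pair_vec k"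
  by (simp add: le_fun_def unit_vec_def pair_vec_def)

lemma pair_vec_diff_unit_vec: "pair_vec k - unit_vec k = unit_vec (-k)"
  by (simp add: pair_vec_def)

lemma admissible_pair_lowering:
  "(\<And>a. a j = 0 \<Longrightarrow> c a = 0) \<Longrightarrow> admissible c (pair_vec l - unit_vec j)"
  by (rule admissible_lowering[of j]) (auto simp: pair_vec_def unit_vec_def)

lemmas exponent_simps = unit_vec_def pair_vec_def sum.distrib sum_subtractf sum_negf
  power_int_add[symmetric] mult.assoc

lemma mu_wshift: "mu q x m = wshift (\<lambda>a. q powi (m * a x)) 0"
  by (intro ext) (simp add: mu_def wshift_def le_fun_def comp_def)

lemma prodmu_wshift:
  assumes "(q::'k::field) \<noteq> 0" "distinct js"
  shows "prodmu q js m = wshift (\<lambda>a. q powi (m * (\<Sum>x\<in>set js. a x))) 0"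
  using assms(2)
proof (induction js)
  case Nil
  then show ?case by (intro ext) (simp add: prodmu_def wshift_def le_fun_def comp_def)
next
  case (Cons y js)
  have IH: "prodmu q js m = wshift (\<lambda>a. q powi (m * (\<Sum>x\<in>set js. a x))) 0"
    by (rule Cons.IH) (use Cons.prems in simp)
  have "prodmu q (y # js) m = mu q y m \<circ> prodmu q js m" by (simp add: prodmu_def)
  also have "\<dots> = wshift (\<lambda>a. q powi (m * (\<Sum>x\<in>set js. a x)) * q powi (m * a y)) 0"
    unfolding mu_wshift IH by (rule wshift_diag_comp)
  also have "\<dots> = wshift (\<lambda>a. q powi (m * (\<Sum>x\<in>set (y # js). a x))) 0"
    using Cons.prems assms(1)
    by (intro wshift_cong) (simp add: power_int_add distrib_left mult.commute)
  finally show ?case .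
qed

lemma tau_wshift:
  assumes "(q::'k::field) \<noteq> 0"
  shows "tau q n t m =
    wshift (\<lambda>a. q powi (m * (\<Sum>x\<in>(if 0 < t then {t..int n} else {-int n..t}). a x))) 0"
  unfolding tau_def using prodmu_wshift[OF assms] by (cases "0 < t") auto

lemma Lam_wshift:
  assumes "(q::'k::field) \<noteq> 0"
  shows "Lam q t m = wshift (\<lambda>a. q powi (m * (\<Sum>x\<in>(if 0 \<le> t then {1..t} else {t..-1}). a x))) 0"
  unfolding Lam_def using prodmu_wshift[OF assms] by (cases "0 \<le> t") auto

lemma qpartial_wshift: "qpartial q x = wshift (\<lambda>a. qint q (a x)) (- unit_vec x)"
proof (intro ext)
  fix f and b :: "int \<Rightarrow> nat"
  have "nat \<circ> ((int \<circ> b) - - unit_vec x) = b(x := b x + 1)"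
    by (auto simp: unit_vec_def fun_eq_iff)
  then show "qpartial q x f b = wshift (\<lambda>a. qint q (a x)) (- unit_vec x) f b"
    by (simp add: qpartial_def wshift_def le_fun_def unit_vec_def)
qed

lemma raising_wshift:
  assumes "\<And>l. l \<in> S \<Longrightarrow> h l \<noteq> x"
  shows "(\<lambda>f b. if 1 \<le> b x then q ^ (\<Sum>l\<in>S. b (h l)) * f (b(x := b x - 1)) else 0)
    = wshift (\<lambda>a. q powi (\<Sum>l\<in>S. a (h l))) (unit_vec x)"
proof (intro ext)
  fix f and b :: "int \<Rightarrow> nat"
  have "nat \<circ> ((int \<circ> b) - unit_vec x) = b(x := b x - 1)"
    by (auto simp: unit_vec_def fun_eq_iff)
  moreover have "0 \<le> (int \<circ> b) - unit_vec x \<longleftrightarrow> 1 \<le> b x"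
    by (auto simp: le_fun_def unit_vec_def)
  moreover have "(\<Sum>l\<in>S. ((int \<circ> b) - unit_vec x) (h l)) = int (\<Sum>l\<in>S. b (h l))"
    using assms by (auto simp: unit_vec_def intro!: sum.cong)
  ultimately show "(if 1 \<le> b x then q ^ (\<Sum>l\<in>S. b (h l)) * f (b(x := b x - 1)) else 0)
      = wshift (\<lambda>a. q powi (\<Sum>l\<in>S. a (h l))) (unit_vec x) f b"
    by (simp add: wshift_def power_int_of_nat flip: of_nat_sum)
qed

lemma xLneg_wshift:
  "1 \<le> k \<Longrightarrow> xLneg q n k = wshift (\<lambda>a. q powi (\<Sum>l\<in>{k+1..int n}. a (-l))) (unit_vec (-k))"
  unfolding xLneg_def[abs_def] by (rule raising_wshift) auto

lemma xRpos_wshift: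
  "1 \<le> k \<Longrightarrow> xRpos q n k = wshift (\<lambda>a. q powi (\<Sum>l\<in>{k+1..int n}. a l)) (unit_vec k)"
  unfolding xRpos_def[abs_def] by (rule raising_wshift) auto

lemma admissible_qpartial: "admissible (\<lambda>a. qint q (a j)) (- unit_vec j)"
  by (rule admissible_lowering[of j]) (auto simp: unit_vec_def qint_def)

definition coeff_D :: "'k::field \<Rightarrow> nat \<Rightarrow> int \<Rightarrow> ivec \<Rightarrow> 'k" where
  "coeff_D q n j a = qint q (a j) * q powi (1 - (\<Sum>x\<in>{1..j-1}. a x) - (\<Sum>x\<in>{1..int n}. a x))"

lemma coeff_D_eq_0: "a j = 0 \<Longrightarrow> coeff_D q n j a = 0"
  by (simp add: coeff_D_def qint_def)

lemma admissible_coeff_D: "admissible (coeff_D q n j) (- unit_vec j)"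
  by (rule admissible_lowering[of j]) (auto simp: unit_vec_def coeff_D_eq_0)

lemma fD_wshift:
  assumes "(q::'k::field) \<noteq> 0" "1 \<le> j" "j \<le> int n"
  shows "fD q n j = wshift (coeff_D q n j) (- unit_vec j)"
  unfolding fD_def using assms
  by (simp add: tau_wshift Lam_wshift qpartial_wshift wshift_comp admissible_nonneg
      admissible_qpartial)
    (rule wshift_cong, simp add: coeff_D_def exponent_simps algebra_simps)

definition psi_term_exp :: "nat \<Rightarrow> int \<Rightarrow> ivec \<Rightarrow> int" where
  "psi_term_exp n k a = (\<Sum>x\<in>{k+1..int n}. a x) + 2 * (\<Sum>x\<in>{1..k}. a x) - a k
     + (\<Sum>l\<in>{k+1..int n}. a (-l)) + a (-k) - 2 * (\<Sum>x\<in>{-int n..-k}. a x)"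

lemma Psi_term_wshift:
  assumes "(q::'k::field) \<noteq> 0" "1 \<le> k" "k \<le> int n"
  shows "tau q n (-k) (-2) \<circ> fXnegL q n k \<circ> fXposR q n k
    = wshift (\<lambda>a. q powi (psi_term_exp n k a)) (pair_vec k)"
  using assms
  by (simp add: fXnegL_def fXposR_def tau_wshift Lam_wshift mu_wshift xLneg_wshift xRpos_wshift
      wshift_comp admissible_nonneg unit_vec_nonneg add_nonneg_nonneg pair_vec_def comp_assoc)
    (rule wshift_cong, simp add: psi_term_exp_def exponent_simps algebra_simps)

definition coeff_Psi :: "'k::field \<Rightarrow> nat \<Rightarrow> int \<Rightarrow> int \<Rightarrow> ivec \<Rightarrow> 'k" where
  "coeff_Psi q n i k a
    = q ^ nat (k - i) * q powi (psi_term_exp n k a + 2 * (\<Sum>x\<in>{-int n..-i}. a x) + 2)"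

lemma Psi_wsum:
  assumes "(q::'k::field) \<noteq> 0" "1 \<le> i" "i \<le> int n + 1"
  shows "Psi q n i = wsum (coeff_Psi q n i) pair_vec {i..int n}"
proof (cases "i = int n + 1")
  case True
  then show ?thesis by (intro ext) (simp add: Psi_def wsum_def)
next
  case False
  have terms: "(\<lambda>f b. \<Sum>k\<in>{i..int n}.
        q ^ nat (k - i) * (tau q n (-k) (-2) \<circ> fXnegL q n k \<circ> fXposR q n k) f b)
      = wsum (\<lambda>k a. q ^ nat (k - i) * q powi (psi_term_exp n k a)) pair_vec {i..int n}"
    unfolding wsum_def using assms
    by (intro ext sum.cong refl) (simp add: Psi_term_wshift scale_wshift)
  have "Psi q n i = wshift (\<lambda>a. q powi (2 * (\<Sum>x\<in>{-int n..-i}. a x))) 0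
      \<circ> wsum (\<lambda>k a. q ^ nat (k - i) * q powi (psi_term_exp n k a)) pair_vec {i..int n}"
    unfolding Psi_def terms using False assms by (simp add: tau_wshift)
  also have "\<dots> = wsum (\<lambda>k a. q ^ nat (k - i) * q powi (psi_term_exp n k a)
      * q powi (2 * (\<Sum>x\<in>{-int n..-i}. (a + pair_vec k) x))) pair_vec {i..int n}"
    by (simp add: wshift_comp_wsum admissible_nonneg pair_vec_nonneg)
  also have "\<dots> = wsum (coeff_Psi q n i) pair_vec {i..int n}"
    using assms by (intro ext wsum_cong) (simp_all add: coeff_Psi_def exponent_simps algebra_simps)
  finally show ?thesis .
qed

section \<open>The q-commutator of D_j and \<Psi>_i\<close>

definition not_root_of_unity :: "'k::field \<Rightarrow> bool" where
  "not_root_of_unity q \<longleftrightarrow> q \<noteq> 0 \<and> (\<forall>m::nat. m > 0 \<longrightarrow> q ^ m \<noteq> 1)"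

lemma not_root_of_unity_nonzero: "not_root_of_unity q \<Longrightarrow> q \<noteq> 0"
  by (simp add: not_root_of_unity_def)

text \<open>As a simp rule this turns equalities of powers of q into linear equalities of exponents.\<close>

lemma power_int_eq_iff:
  assumes "not_root_of_unity q"
  shows "q powi x = q powi y \<longleftrightarrow> x = y"
proof
  assume eq: "q powi x = q powi y"
  have q0: "q \<noteq> 0" using assms by (rule not_root_of_unity_nonzero)
  have ne1: "q powi d \<noteq> 1" if "d > 0" for d :: int
    using assms that by (simp add: power_int_def not_root_of_unity_def)
  have "q powi (x - y) = 1" "q powi (y - x) = 1"
    using eq q0 by (simp_all add: power_int_diff)
  with ne1 show "x = y" by (metis diff_gt_0_iff_gt linorder_neqE_linordered_idom)
qed simp

lemma not_root_of_unity_lambda_nonzero: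
  assumes "not_root_of_unity q"
  shows "q - inverse q \<noteq> 0"
proof
  assume "q - inverse q = 0"
  then have "q * q = q * inverse q" by simp
  then have "q ^ 2 = 1"
    using not_root_of_unity_nonzero[OF assms] by (simp add: power2_eq_square)
  with assms show False by (simp add: not_root_of_unity_def)
qed

lemma qint_succ:
  assumes "(q::'k::field) \<noteq> 0" "q - inverse q \<noteq> 0"
  shows "qint q (m + 1) = q * qint q m + q powi (- m)"
proof -
  have "q powi (m + 1) = q * q powi m" "q powi (- m) = q * q powi (- (m + 1))"
    using assms(1) by (simp_all add: power_int_add power_int_diff)
  then have "q powi (m + 1) - q powi (- (m + 1))
      = q * (q powi m - q powi (- m)) + q powi (- m) * (q - inverse q)"
    using assms(1) by (simp add: algebra_simps)
  then show ?thesis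
    using assms(2) by (simp add: qint_def field_simps)
qed

lemma coeff_Psi_lower:
  assumes "not_root_of_unity q" "1 \<le> i" "i \<le> k" "k \<le> int n" "1 \<le> j" "j \<le> int n"
  shows "coeff_Psi q n i k (a - unit_vec j)
    = q powi (if k \<le> j then -1 else -2) * coeff_Psi q n i k a"
  using assms not_root_of_unity_nonzero[OF assms(1)]
  by (simp add: coeff_Psi_def psi_term_exp_def exponent_simps algebra_simps power_int_eq_iff)

lemma coeff_D_raise_pair:
  assumes "not_root_of_unity q" "1 \<le> k" "k \<le> int n" "1 \<le> j" "j \<le> int n" "k \<noteq> j"
  shows "coeff_D q n j (a + pair_vec k) = q powi (if k < j then -2 else -1) * coeff_D q n j a"
  using assms not_root_of_unity_nonzero[OF assms(1)]
  by (simp add: coeff_D_def exponent_simps algebra_simps power_int_eq_iff)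

lemma coeff_D_raise_own_pair:
  assumes "not_root_of_unity q" "1 \<le> j" "j \<le> int n"
  shows "coeff_D q n j (a + pair_vec j)
    = qint q (a j + 1) * q powi (- (\<Sum>x\<in>{1..j-1}. a x) - (\<Sum>x\<in>{1..int n}. a x))"
  using assms not_root_of_unity_nonzero[OF assms(1)]
  by (simp add: coeff_D_def exponent_simps algebra_simps power_int_eq_iff)

definition coeff_comm :: "'k::field \<Rightarrow> nat \<Rightarrow> int \<Rightarrow> int \<Rightarrow> int \<Rightarrow> ivec \<Rightarrow> 'k" where
  "coeff_comm q n i j k a =
    (if k < j then (inverse (q ^ 2) - 1) * (coeff_Psi q n i k a * coeff_D q n j a)
     else if k = j
       then coeff_Psi q n i j a * q powi (- (\<Sum>x\<in>{1..j-1}. a x) - (\<Sum>x\<in>{1..int n}. a x) - a j)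
     else 0)"

lemma coeff_comm_eq:
  assumes q: "not_root_of_unity q" and "1 \<le> i" "i \<le> j" "j \<le> int n" "i \<le> k" "k \<le> int n"
  shows "coeff_Psi q n i k a * coeff_D q n j (a + pair_vec k)
      - q * (coeff_D q n j a * coeff_Psi q n i k (a - unit_vec j)) = coeff_comm q n i j k a"
proof -
  have q0: "q \<noteq> 0" using q by (rule not_root_of_unity_nonzero)
  let ?P = "coeff_Psi q n i k a" and ?D = "coeff_D q n j a"
  consider "k < j" | "k = j" | "j < k" by linarith
  then show ?thesis
  proof cases
    case 1
    then have "coeff_Psi q n i k a * coeff_D q n j (a + pair_vec k)
        - q * (coeff_D q n j a * coeff_Psi q n i k (a - unit_vec j))
        = ?P * (inverse q ^ 2 * ?D) - q * (?D * (inverse q * ?P))"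
      using assms by (simp add: coeff_D_raise_pair coeff_Psi_lower power_int_minus power_inverse)
    also have "\<dots> = (inverse (q ^ 2) - 1) * (?P * ?D)"
      using q0 by (simp add: field_simps power2_eq_square)
    finally show ?thesis using 1 by (simp add: coeff_comm_def)
  next
    case 2
    define X where "X = q powi (- (\<Sum>x\<in>{1..j-1}. a x) - (\<Sum>x\<in>{1..int n}. a x))"
    have D: "?D = qint q (a j) * (q * X)"
      using q0 power_int_add[of q 1 "- (\<Sum>x\<in>{1..j-1}. a x) - (\<Sum>x\<in>{1..int n}. a x)"]
      by (simp add: coeff_D_def X_def algebra_simps)
    have "coeff_Psi q n i k a * coeff_D q n j (a + pair_vec k)
        - q * (coeff_D q n j a * coeff_Psi q n i k (a - unit_vec j))
        = ?P * X * (qint q (a j + 1) - q * qint q (a j))"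
      using assms 2 q0 by (simp add: coeff_D_raise_own_pair coeff_Psi_lower D X_def power_int_minus
          algebra_simps)
    also have "\<dots> = ?P * X * q powi (- a j)"
      using q0 not_root_of_unity_lambda_nonzero[OF q] by (simp add: qint_succ)
    also have "\<dots> = coeff_comm q n i j k a"
      using 2 q0 by (simp add: coeff_comm_def X_def power_int_add[symmetric] mult.assoc)
    finally show ?thesis .
  next
    case 3
    then have "coeff_Psi q n i k a * coeff_D q n j (a + pair_vec k)
        - q * (coeff_D q n j a * coeff_Psi q n i k (a - unit_vec j))
        = ?P * (inverse q * ?D) - q * (?D * (inverse q ^ 2 * ?P))"
      using assms by (simp add: coeff_D_raise_pair coeff_Psi_lower power_int_minus power_inverse)
    also have "\<dots> = 0"
      using q0 by (simp add: field_simps power2_eq_square)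
    finally show ?thesis using 3 by (simp add: coeff_comm_def)
  qed
qed

lemma qcomm_fD_Psi_wsum:
  assumes q: "not_root_of_unity q" and ij: "1 \<le> i" "i \<le> j" "j \<le> int n"
  shows "qcomm q (fD q n j) (Psi q n i)
    = wsum (coeff_comm q n i j) (\<lambda>k. pair_vec k - unit_vec j) {i..j}" (is "_ = wsum _ ?s _")
proof (intro ext)
  fix g b
  have q0: "q \<noteq> 0" using q by (rule not_root_of_unity_nonzero)
  have "qcomm q (fD q n j) (Psi q n i) g b
      = wsum (\<lambda>k a. coeff_Psi q n i k a * coeff_D q n j (a + pair_vec k)) ?s {i..int n} g b
      - q * wsum (\<lambda>k a. coeff_D q n j a * coeff_Psi q n i k (a - unit_vec j)) ?s {i..int n} g b"
    using ij q0 by (simp add: qcomm_def fD_wshift Psi_wsum wshift_wsum wsum_wshift admissible_coeff_D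
        admissible_nonneg pair_vec_nonneg)
  also have "\<dots> = wsum (coeff_comm q n i j) ?s {i..int n} g b"
    unfolding wsum_diff_scaled by (rule wsum_cong) (simp_all add: coeff_comm_eq[OF q ij])
  also have "\<dots> = wsum (coeff_comm q n i j) ?s {i..j} g b"
    unfolding wsum_def using ij
    by (intro sum.mono_neutral_right) (auto intro!: wshift_eq_0 simp: coeff_comm_def)
  finally show "qcomm q (fD q n j) (Psi q n i) g b = wsum (coeff_comm q n i j) ?s {i..j} g b" .
qed

section \<open>X_(-j_R) and the commutation of the summands\<close>

lemma mu_fXnegL_wshift:
  assumes "(q::'k::field) \<noteq> 0" "1 \<le> j"
  shows "mu q j 2 \<circ> fXnegL q n j
    = wshift (\<lambda>a. q powi ((\<Sum>m\<in>{j+1..int n}. a (-m)) + a (-j) + 1 + a j)) (unit_vec (-j))"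
  using assms
  by (simp add: fXnegL_def mu_wshift xLneg_wshift wshift_comp admissible_nonneg unit_vec_nonneg
      comp_assoc)
    (rule wshift_cong, simp add: exponent_simps algebra_simps)

lemma mu_Psi_fD_wsum:
  assumes "(q::'k::field) \<noteq> 0" "1 \<le> j" "j \<le> int n"
  shows "mu q (-j) 2 \<circ> Psi q n (j + 1) \<circ> fD q n j
    = wsum (\<lambda>l a. coeff_D q n j a * coeff_Psi q n (j + 1) l (a - unit_vec j) * q powi (2 * a (-j)))
        (\<lambda>l. pair_vec l - unit_vec j) {j+1..int n}"
proof -
  have "Psi q n (j + 1) \<circ> fD q n j
      = wsum (\<lambda>l a. coeff_D q n j a * coeff_Psi q n (j + 1) l (a - unit_vec j))
          (\<lambda>l. pair_vec l - unit_vec j) {j+1..int n}"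
    using assms by (simp add: Psi_wsum fD_wshift wsum_comp_wshift admissible_coeff_D)
  then show ?thesis
    using assms
    by (simp add: comp_assoc mu_wshift wshift_comp_wsum admissible_pair_lowering coeff_D_eq_0)
      (intro ext wsum_cong; auto simp: pair_vec_def unit_vec_def)
qed

definition coeff_XR :: "'k::field \<Rightarrow> nat \<Rightarrow> int \<Rightarrow> int \<Rightarrow> ivec \<Rightarrow> 'k" where
  "coeff_XR q n j l a =
    (if l = j then q ^ nat j * q powi ((\<Sum>m\<in>{j+1..int n}. a (-m)) + a (-j) + 1 + a j
                                      + 2 * (\<Sum>x\<in>{1-j..-1}. a x))
     else q ^ nat j * (q - inverse q) * q ^ nat (l - j - 1) * qint q (a j)
       * q powi (1 - (\<Sum>x\<in>{1..j-1}. a x) - (\<Sum>x\<in>{1..int n}. a x) + psi_term_exp n l a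
                 + 2 * (\<Sum>x\<in>{-int n..-(j+1)}. a x) + 2 * a (-j) + 2 * (\<Sum>x\<in>{1-j..-1}. a x)))"

lemma fXnegR_wsum:
  assumes q0: "(q::'k::field) \<noteq> 0" and j: "1 \<le> j" "j \<le> int n"
  shows "fXnegR q n j = wsum (coeff_XR q n j) (\<lambda>l. pair_vec l - unit_vec j) {j..int n}"
proof (intro ext)
  fix g b
  define cL where "cL = (\<lambda>a. q powi (2 * (\<Sum>x\<in>{1-j..-1}. a x)))"
  define cA where "cA = (\<lambda>a. q powi ((\<Sum>m\<in>{j+1..int n}. a (-m)) + a (-j) + 1 + a j))"
  define cB where "cB = (\<lambda>l a. (q - inverse q)
    * (coeff_D q n j a * coeff_Psi q n (j + 1) l (a - unit_vec j) * q powi (2 * a (-j))))"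
  let ?c = "\<lambda>l. if l = j then cA else cB l" and ?s = "\<lambda>l. pair_vec l - unit_vec j"
  have L: "Lam q (1 - j) 2 = wshift cL 0"
    using q0 j by (cases "j = 1") (simp_all add: Lam_wshift cL_def)
  have split: "{j..int n} = insert j {j+1..int n}" using j by auto
  have inner: "(\<lambda>b'. (mu q j 2 \<circ> fXnegL q n j) g b'
      + (q - inverse q) * (mu q (-j) 2 \<circ> Psi q n (j + 1) \<circ> fD q n j) g b')
      = wsum ?c ?s {j..int n} g"
    using assms unfolding mu_fXnegL_wshift[OF q0 j(1)] mu_Psi_fD_wsum[OF assms]
    by (intro ext) (simp add: wsum_def split pair_vec_diff_unit_vec sum_distrib_left scale_wshift
        cA_def cB_def)
  have adm: "admissible (?c l) (?s l)" for l
    by (cases "l = j")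
      (simp_all add: pair_vec_diff_unit_vec admissible_nonneg unit_vec_nonneg admissible_pair_lowering
        cB_def coeff_D_eq_0)
  have "fXnegR q n j g b = q ^ nat j * wshift cL 0 (wsum ?c ?s {j..int n} g) b"
    unfolding fXnegR_def L inner ..
  also have "\<dots> = wsum (\<lambda>l a. q ^ nat j * (?c l a * cL (a + ?s l))) ?s {j..int n} g b"
    using adm by (simp add: wshift_wsum scale_wsum)
  also have "\<dots> = wsum (coeff_XR q n j) ?s {j..int n} g b"
    using assms by (intro wsum_cong)
      (auto simp: coeff_XR_def cA_def cB_def cL_def coeff_D_def coeff_Psi_def psi_term_exp_def
        exponent_simps algebra_simps)
  finally show "fXnegR q n j g b = wsum (coeff_XR q n j) ?s {j..int n} g b" .
qed

lemma admissible_coeff_comm: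
  assumes "k \<le> j"
  shows "admissible (coeff_comm q n i j k) (pair_vec k - unit_vec j)"
proof (cases "k = j")
  case True
  then show ?thesis by (simp add: pair_vec_diff_unit_vec admissible_nonneg unit_vec_nonneg)
next
  case False
  then show ?thesis
    using assms by (intro admissible_pair_lowering) (simp add: coeff_comm_def coeff_D_eq_0)
qed

lemma admissible_coeff_XR: "admissible (coeff_XR q n j l) (pair_vec l - unit_vec j)"
proof (cases "l = j")
  case True
  then show ?thesis by (simp add: pair_vec_diff_unit_vec admissible_nonneg unit_vec_nonneg)
next
  case False
  then show ?thesis by (intro admissible_pair_lowering) (simp add: coeff_XR_def qint_def)
qed

lemma coeff_comm_coeff_XR_commute:
  assumes "not_root_of_unity q" "1 \<le> i" "i \<le> k" "k \<le> j" "j \<le> l" "l \<le> int n"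
  shows "coeff_comm q n i j k a * coeff_XR q n j l (a + (pair_vec k - unit_vec j))
       = coeff_XR q n j l a * coeff_comm q n i j k (a + (pair_vec l - unit_vec j))"
  using assms not_root_of_unity_nonzero[OF assms(1)]
  by (cases "k = j"; cases "l = j")
    (simp_all add: coeff_comm_def coeff_XR_def coeff_Psi_def coeff_D_def psi_term_exp_def
      exponent_simps mult_ac power_int_eq_iff)

theorem corollary5p5:
  fixes q :: "'k::field_char_0" and n :: nat and i j :: int
  assumes "n \<ge> 2"
    and "q \<noteq> 0"
    and "\<forall>m::nat. m > 0 \<longrightarrow> q ^ m \<noteq> 1"
    and "1 \<le> i" and "i \<le> j" and "j \<le> int n"
    and "f \<in> Xspace n"
  shows "qcomm 1 (fXnegR q n j) (qcomm q (fD q n j) (Psi q n i)) f = (\<lambda>b. 0)"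
proof -
  have q: "not_root_of_unity q" using assms(2,3) by (simp add: not_root_of_unity_def)
  let ?C = "qcomm q (fD q n j) (Psi q n i)"
  have C: "?C = wsum (coeff_comm q n i j) (\<lambda>k. pair_vec k - unit_vec j) {i..j}"
    using q assms(4-6) by (rule qcomm_fD_Psi_wsum)
  have X: "fXnegR q n j = wsum (coeff_XR q n j) (\<lambda>l. pair_vec l - unit_vec j) {j..int n}"
    using assms(2,4-6) by (intro fXnegR_wsum) auto
  have "fXnegR q n j (?C f) = ?C (fXnegR q n j f)"
    unfolding C X
    by (intro wsum_commute wshift_commute)
      (use q assms(4-6) in \<open>auto intro: admissible_coeff_comm admissible_coeff_XR
        coeff_comm_coeff_XR_commute\<close>)
  then show ?thesis by (simp add: qcomm_def)
qed

end
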